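(* Let $G$ be a finite group and $f\in\mathrm{Aut}(G)$ such that $\mathrm{GAlex}(G,f)$ is connected. If $\mathrm{GAlex}(G,f)\cong\Lambda\times_\phi Q$ for some quandle $Q$, group $\Lambda$ and function $\phi:Q\times Q\to\Lambda$ with $|\Lambda|=|\mathrm{Fix}(G,f)|$, then $\Lambda\cong\mathrm{Fix}(G,f)$ as groups. Hence if $\mathrm{Fix}(G,f)$ is not abelian, then $\Lambda\times_\phi Q$ is not an abelian extension of $Q$.
   Context: A quandle is a set with operation $*$ satisfying $a*a=a$; unique right division; $(a*b)*c=(a*c)*(b*c)$. Connected means the group generated by the right translations $R_a(y)=y*a$ acts transitively. $\mathrm{GAlex}(G,f)$ is the quandle on $G$ with $a*b=f(ab^{-1})b$; $\mathrm{Fix}(G,f)=\{x\in G: f(x)=x\}$. For a group $\Lambda$ and $\phi:Q\times Q\to\Lambda$, $\Lambda\times_\phi Q$ is $\Lambda\times Q$ with $(\lambda,a)*(\mu,b)=(\lambda\phi(a,b),a*b)$, assumed to be a quandle; it is called an abelian extension of $Q$ when $\Lambda$ is abelian. *)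

theory Defs
  imports "HOL-Algebra.Algebra"
begin

definition quandle :: "'q set \<Rightarrow> ('q \<Rightarrow> 'q \<Rightarrow> 'q) \<Rightarrow> bool" where
  "quandle Q op \<longleftrightarrow>
     (\<forall>a\<in>Q. \<forall>b\<in>Q. op a b \<in> Q) \<and>
     (\<forall>a\<in>Q. op a a = a) \<and>
     (\<forall>a\<in>Q. \<forall>b\<in>Q. \<exists>!c. c \<in> Q \<and> op c b = a) \<and>
     (\<forall>a\<in>Q. \<forall>b\<in>Q. \<forall>c\<in>Q. op (op a b) c = op (op a c) (op b c))"

definition right_transl :: "'q set \<Rightarrow> ('q \<Rightarrow> 'q \<Rightarrow> 'q) \<Rightarrow> 'q \<Rightarrow> ('q \<Rightarrow> 'q)" where
  "right_transl Q op a = (\<lambda>y\<in>Q. op y a)"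

definition inn_group :: "'q set \<Rightarrow> ('q \<Rightarrow> 'q \<Rightarrow> 'q) \<Rightarrow> ('q \<Rightarrow> 'q) set" where
  "inn_group Q op = generate (BijGroup Q) (right_transl Q op ` Q)"

definition connected_quandle :: "'q set \<Rightarrow> ('q \<Rightarrow> 'q \<Rightarrow> 'q) \<Rightarrow> bool" where
  "connected_quandle Q op \<longleftrightarrow> quandle Q op \<and>
     (\<forall>x\<in>Q. \<forall>y\<in>Q. \<exists>g\<in>inn_group Q op. g x = y)"

definition galex_op :: "('g, 'b) monoid_scheme \<Rightarrow> ('g \<Rightarrow> 'g) \<Rightarrow> 'g \<Rightarrow> 'g \<Rightarrow> 'g" where
  "galex_op G f a b = f (a \<otimes>\<^bsub>G\<^esub> inv\<^bsub>G\<^esub> b) \<otimes>\<^bsub>G\<^esub> b"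

definition Fix :: "('g, 'b) monoid_scheme \<Rightarrow> ('g \<Rightarrow> 'g) \<Rightarrow> 'g set" where
  "Fix G f = {x \<in> carrier G. f x = x}"

definition ext_op :: "('l, 'c) monoid_scheme \<Rightarrow> ('q \<Rightarrow> 'q \<Rightarrow> 'l) \<Rightarrow> ('q \<Rightarrow> 'q \<Rightarrow> 'q)
                       \<Rightarrow> ('l \<times> 'q) \<Rightarrow> ('l \<times> 'q) \<Rightarrow> ('l \<times> 'q)" where
  "ext_op L phi op x y = (fst x \<otimes>\<^bsub>L\<^esub> phi (snd x) (snd y), op (snd x) (snd y))"

definition quandle_iso :: "'a set \<Rightarrow> ('a \<Rightarrow> 'a \<Rightarrow> 'a) \<Rightarrow> 'b set \<Rightarrow> ('b \<Rightarrow> 'b \<Rightarrow> 'b) \<Rightarrow> bool" where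
  "quandle_iso A opA B opB \<longleftrightarrow>
     (\<exists>h. bij_betw h A B \<and> (\<forall>a\<in>A. \<forall>b\<in>A. h (opA a b) = opB (h a) (h b)))"

end

theory Submission
  imports Defs
begin

text \<open>Left multiplication by \<open>\<mu> \<in> \<Lambda>\<close> on \<open>\<Lambda> \<times>\<^sub>\<phi> Q\<close> commutes with every right
  translation. Transported to \<open>GAlex(G,f)\<close>, it becomes a map commuting with the inner group;
  by connectedness such a map is determined by its value at \<open>1\<close>, and comparing with left
  multiplication by that value (which is a fixed point of \<open>f\<close>, since \<open>x * 1 = f x\<close>) shows
  that it is left multiplication by an element of \<open>Fix(G,f)\<close>. This gives an injective
  homomorphism \<open>\<Lambda> \<rightarrow> Fix(G,f)\<close>, bijective by the cardinality hypothesis.\<close>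

definition right_equivariant :: "'q set \<Rightarrow> ('q \<Rightarrow> 'q \<Rightarrow> 'q) \<Rightarrow> ('q \<Rightarrow> 'q) \<Rightarrow> bool" where
  "right_equivariant Q op T \<longleftrightarrow>
     (\<forall>x\<in>Q. T x \<in> Q) \<and> (\<forall>x\<in>Q. \<forall>y\<in>Q. T (op x y) = op (T x) y)"

lemma right_transl_Bij:
  assumes "quandle Q op" and "a \<in> Q"
  shows "right_transl Q op a \<in> Bij Q"
proof -
  have "bij_betw (\<lambda>y. op y a) Q Q"
  proof (rule bij_betwI')
    show "\<And>x y. x \<in> Q \<Longrightarrow> y \<in> Q \<Longrightarrow> (op x a = op y a) = (x = y)"
      using assms unfolding quandle_def by metis
    show "\<And>x. x \<in> Q \<Longrightarrow> op x a \<in> Q"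
      using assms unfolding quandle_def by blast
    show "\<And>y. y \<in> Q \<Longrightarrow> \<exists>x\<in>Q. y = op x a"
      using assms unfolding quandle_def by metis
  qed
  then show ?thesis
    unfolding Bij_def right_transl_def by simp
qed

lemma subgroup_commuting_Bij:
  assumes "\<forall>x\<in>Q. T x \<in> Q"
  shows "subgroup {p \<in> Bij Q. \<forall>x\<in>Q. T (p x) = p (T x)} (BijGroup Q)"
proof (rule group.subgroupI[OF group_BijGroup])
  show "{p \<in> Bij Q. \<forall>x\<in>Q. T (p x) = p (T x)} \<noteq> {}"
    using assms id_Bij[of Q] by auto
next
  fix p assume p: "p \<in> {p \<in> Bij Q. \<forall>x\<in>Q. T (p x) = p (T x)}"
  then have bij: "bij_betw p Q Q" by (simp add: Bij_def)
  have "T (inv_into Q p x) = inv_into Q p (T x)" if x: "x \<in> Q" for x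
  proof -
    define z where "z = inv_into Q p x"
    have z: "z \<in> Q" "p z = x"
      using bij x unfolding z_def by (auto simp: bij_betw_def inv_into_into f_inv_into_f)
    then have "T x = p (T z)" using p by auto
    then show ?thesis
      using bij assms z unfolding z_def by (simp add: bij_betw_def)
  qed
  with p show "inv\<^bsub>BijGroup Q\<^esub> p \<in> {p \<in> Bij Q. \<forall>x\<in>Q. T (p x) = p (T x)}"
    using assms by (simp add: inv_BijGroup restrict_inv_into_Bij)
next
  fix p q assume "p \<in> {p \<in> Bij Q. \<forall>x\<in>Q. T (p x) = p (T x)}"
    and "q \<in> {p \<in> Bij Q. \<forall>x\<in>Q. T (p x) = p (T x)}"
  moreover have "compose Q p q \<in> Bij Q" if "p \<in> Bij Q" "q \<in> Bij Q"
    using that by (rule compose_Bij)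
  moreover have "q x \<in> Q" if "q \<in> Bij Q" "x \<in> Q" for x
    using Bij_imp_funcset[OF that(1)] that(2) by blast
  ultimately show "p \<otimes>\<^bsub>BijGroup Q\<^esub> q \<in> {p \<in> Bij Q. \<forall>x\<in>Q. T (p x) = p (T x)}"
    using assms by (auto simp: BijGroup_def compose_def)
qed (auto simp: BijGroup_def)

lemma right_equivariant_commutes_inn_group:
  assumes "quandle Q op" and T: "right_equivariant Q op T"
    and "p \<in> inn_group Q op" and "x \<in> Q"
  shows "T (p x) = p (T x)"
proof -
  let ?C = "{p \<in> Bij Q. \<forall>x\<in>Q. T (p x) = p (T x)}"
  have "right_transl Q op ` Q \<subseteq> ?C"
    using T right_transl_Bij[OF assms(1)]
    by (auto simp: right_equivariant_def right_transl_def)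
  then have "inn_group Q op \<subseteq> ?C"
    unfolding inn_group_def
    using T by (intro group.generate_subgroup_incl[OF group_BijGroup] subgroup_commuting_Bij)
      (simp_all add: right_equivariant_def)
  with assms show ?thesis by blast
qed

lemma connected_right_equivariant_eqI:
  assumes conn: "connected_quandle Q op"
    and S: "right_equivariant Q op S" and T: "right_equivariant Q op T"
    and "a \<in> Q" and "S a = T a" and "x \<in> Q"
  shows "S x = T x"
proof -
  have q: "quandle Q op" using conn by (simp add: connected_quandle_def)
  obtain p where p: "p \<in> inn_group Q op" "p a = x"
    using conn \<open>a \<in> Q\<close> \<open>x \<in> Q\<close> unfolding connected_quandle_def by blast
  have "S x = p (S a)" using right_equivariant_commutes_inn_group[OF q S p(1) \<open>a \<in> Q\<close>] p(2) by simp
  also have "\<dots> = T x" using right_equivariant_commutes_inn_group[OF q T p(1) \<open>a \<in> Q\<close>] p(2) \<open>S a = T a\<close> by simp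
  finally show ?thesis .
qed

lemma right_equivariant_transfer:
  assumes h: "bij_betw h A B" and hom: "\<forall>a\<in>A. \<forall>b\<in>A. h (opA a b) = opB (h a) (h b)"
    and closed: "\<forall>a\<in>A. \<forall>b\<in>A. opA a b \<in> A"
    and T: "right_equivariant B opB T"
  shows "right_equivariant A opA (\<lambda>x. inv_into A h (T (h x)))"
  unfolding right_equivariant_def
proof (intro conjI ballI)
  have TB: "T (h x) \<in> h ` A" if "x \<in> A" for x
    using h T that by (auto simp: bij_betw_def right_equivariant_def)
  show "inv_into A h (T (h x)) \<in> A" if "x \<in> A" for x
    using TB[OF that] by (rule inv_into_into)
  fix x y assume x: "x \<in> A" and y: "y \<in> A"
  define x' where "x' = inv_into A h (T (h x))"
  have x': "x' \<in> A" "h x' = T (h x)"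
    unfolding x'_def using TB[OF x] by (simp_all add: inv_into_into f_inv_into_f)
  have hB: "h x \<in> B" "h y \<in> B" using h x y by (auto simp: bij_betw_def)
  have "h (opA x' y) = opB (T (h x)) (h y)" using hom x' y by simp
  also have "\<dots> = T (h (opA x y))" using T hB hom x y by (simp add: right_equivariant_def)
  finally have "inv_into A h (h (opA x' y)) = inv_into A h (T (h (opA x y)))" by simp
  moreover have "inv_into A h (h (opA x' y)) = opA x' y"
    using h closed x'(1) y by (simp add: bij_betw_def)
  ultimately show "inv_into A h (T (h (opA x y))) = opA x' y" by simp
qed

lemma subgroup_Fix:
  assumes "group G" and "f \<in> hom G G"
  shows "subgroup (Fix G f) G"
proof -
  interpret group_hom G G f
    using assms by (simp add: group_hom_def group_hom_axioms_def)
  show ?thesis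
    by (rule G.subgroupI) (auto simp: Fix_def)
qed

lemma galex_op_one_right:
  assumes "group G" and "f \<in> hom G G" and "x \<in> carrier G"
  shows "galex_op G f x \<one>\<^bsub>G\<^esub> = f x"
proof -
  interpret group_hom G G f
    using assms by (simp add: group_hom_def group_hom_axioms_def)
  show ?thesis using assms(3) by (simp add: galex_op_def)
qed

lemma right_equivariant_galex_left_mult:
  assumes "group G" and "f \<in> hom G G" and "c \<in> Fix G f"
  shows "right_equivariant (carrier G) (galex_op G f) (\<lambda>x. c \<otimes>\<^bsub>G\<^esub> x)"
proof -
  interpret group_hom G G f
    using assms by (simp add: group_hom_def group_hom_axioms_def)
  have "c \<in> carrier G" "f c = c" using assms(3) by (auto simp: Fix_def)
  then show ?thesis
    by (simp add: right_equivariant_def galex_op_def G.m_assoc)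
qed

lemma galex_right_equivariant_left_mult:
  assumes G: "group G" "f \<in> hom G G" and conn: "connected_quandle (carrier G) (galex_op G f)"
    and T: "right_equivariant (carrier G) (galex_op G f) T"
  shows "T \<one>\<^bsub>G\<^esub> \<in> Fix G f" and "x \<in> carrier G \<Longrightarrow> T x = T \<one>\<^bsub>G\<^esub> \<otimes>\<^bsub>G\<^esub> x"
proof -
  interpret group_hom G G f
    using G by (simp add: group_hom_def group_hom_axioms_def)
  have T1: "T \<one>\<^bsub>G\<^esub> \<in> carrier G" using T by (simp add: right_equivariant_def)
  have "T \<one>\<^bsub>G\<^esub> = T (galex_op G f \<one>\<^bsub>G\<^esub> \<one>\<^bsub>G\<^esub>)"
    by (simp add: galex_op_one_right[OF G])
  also have "\<dots> = galex_op G f (T \<one>\<^bsub>G\<^esub>) \<one>\<^bsub>G\<^esub>"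
    using T by (simp add: right_equivariant_def)
  also have "\<dots> = f (T \<one>\<^bsub>G\<^esub>)"
    using T1 by (simp add: galex_op_one_right[OF G])
  finally show fix1: "T \<one>\<^bsub>G\<^esub> \<in> Fix G f" using T1 by (simp add: Fix_def)
  show "T x = T \<one>\<^bsub>G\<^esub> \<otimes>\<^bsub>G\<^esub> x" if "x \<in> carrier G"
    using connected_right_equivariant_eqI[OF conn T
        right_equivariant_galex_left_mult[OF G fix1] one_closed _ that] T1 by simp
qed

lemma right_equivariant_ext_left_mult:
  assumes "group L" and "\<forall>a\<in>Q. \<forall>b\<in>Q. phi a b \<in> carrier L" and "\<mu> \<in> carrier L"
  shows "right_equivariant (carrier L \<times> Q) (ext_op L phi op) (\<lambda>x. (\<mu> \<otimes>\<^bsub>L\<^esub> fst x, snd x))"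
proof -
  interpret group L by fact
  show ?thesis using assms(2,3) by (auto simp: right_equivariant_def ext_op_def m_assoc)
qed

lemma galex_ext_fix_embedding:
  assumes G: "group G" "f \<in> hom G G" and conn: "connected_quandle (carrier G) (galex_op G f)"
    and L: "group L" "\<forall>a\<in>Q. \<forall>b\<in>Q. phi a b \<in> carrier L"
    and iso: "quandle_iso (carrier G) (galex_op G f) (carrier L \<times> Q) (ext_op L phi op)"
  obtains c where "c \<in> hom L (G\<lparr>carrier := Fix G f\<rparr>)" and "inj_on c (carrier L)"
proof -
  interpret G: group G by (fact G(1))
  interpret L: group L by (fact L(1))
  let ?X = "carrier G"
  obtain h where h: "bij_betw h ?X (carrier L \<times> Q)"
    and h_hom: "\<forall>a\<in>?X. \<forall>b\<in>?X. h (galex_op G f a b) = ext_op L phi op (h a) (h b)"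
    using iso unfolding quandle_iso_def by blast
  have closed: "\<forall>a\<in>?X. \<forall>b\<in>?X. galex_op G f a b \<in> ?X"
    using conn by (simp add: connected_quandle_def quandle_def)
  define T where "T \<mu> x = inv_into ?X h (\<mu> \<otimes>\<^bsub>L\<^esub> fst (h x), snd (h x))" for \<mu> x
  have T: "right_equivariant ?X (galex_op G f) (T \<mu>)" if "\<mu> \<in> carrier L" for \<mu>
    unfolding T_def
    using right_equivariant_transfer[OF h h_hom closed
        right_equivariant_ext_left_mult[OF L that]] by simp
  have hX: "fst (h x) \<in> carrier L" "snd (h x) \<in> Q" if "x \<in> ?X" for x
    using bij_betwE[OF h] that by (simp_all add: mem_Times_iff)
  have hT: "h (T \<mu> x) = (\<mu> \<otimes>\<^bsub>L\<^esub> fst (h x), snd (h x))" if "\<mu> \<in> carrier L" "x \<in> ?X" for \<mu> x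
    unfolding T_def using h hX[OF that(2)] that(1)
    by (intro f_inv_into_f) (simp add: bij_betw_def)
  define c where "c \<mu> = T \<mu> \<one>\<^bsub>G\<^esub>" for \<mu>
  have T_left_mult: "T \<mu> x = c \<mu> \<otimes>\<^bsub>G\<^esub> x" if "\<mu> \<in> carrier L" "x \<in> ?X" for \<mu> x
    unfolding c_def by (rule galex_right_equivariant_left_mult(2)[OF G conn T[OF that(1)] that(2)])
  have c_Fix: "c \<mu> \<in> Fix G f" if "\<mu> \<in> carrier L" for \<mu>
    unfolding c_def by (rule galex_right_equivariant_left_mult(1)[OF G conn T[OF that]])
  have "c (\<mu> \<otimes>\<^bsub>L\<^esub> \<nu>) = c \<mu> \<otimes>\<^bsub>G\<^esub> c \<nu>" if "\<mu> \<in> carrier L" "\<nu> \<in> carrier L" for \<mu> \<nu>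
  proof -
    have "c \<nu> \<in> ?X" using c_Fix[OF that(2)] by (simp add: Fix_def)
    then have "c \<mu> \<otimes>\<^bsub>G\<^esub> c \<nu> = T \<mu> (c \<nu>)"
      using T_left_mult[OF that(1)] by simp
    also have "\<dots> = T \<mu> (T \<nu> \<one>\<^bsub>G\<^esub>)" by (simp only: c_def)
    also have "\<dots> = c (\<mu> \<otimes>\<^bsub>L\<^esub> \<nu>)"
      unfolding c_def T_def[of \<mu>] T_def[of "\<mu> \<otimes>\<^bsub>L\<^esub> \<nu>"]
      using hT[OF that(2) G.one_closed] hX[OF G.one_closed] that by (simp add: L.m_assoc)
    finally show ?thesis by simp
  qed
  then have "c \<in> hom L (G\<lparr>carrier := Fix G f\<rparr>)"
    using c_Fix by (auto simp: hom_def)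
  moreover have "inj_on c (carrier L)"
  proof (rule inj_onI)
    fix \<mu> \<nu> assume \<mu>: "\<mu> \<in> carrier L" and \<nu>: "\<nu> \<in> carrier L" and "c \<mu> = c \<nu>"
    then have "h (T \<mu> \<one>\<^bsub>G\<^esub>) = h (T \<nu> \<one>\<^bsub>G\<^esub>)" by (simp add: c_def)
    then have "\<mu> \<otimes>\<^bsub>L\<^esub> fst (h \<one>\<^bsub>G\<^esub>) = \<nu> \<otimes>\<^bsub>L\<^esub> fst (h \<one>\<^bsub>G\<^esub>)"
      using hT \<mu> \<nu> G.one_closed by simp
    then show "\<mu> = \<nu>" using \<mu> \<nu> hX[OF G.one_closed] by simp
  qed
  ultimately show ?thesis by (rule that)
qed

theorem mainTheorem15:
  fixes G :: "'g monoid" and f :: "'g \<Rightarrow> 'g"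
    and L :: "'l monoid" and Q :: "'q set" and op :: "'q \<Rightarrow> 'q \<Rightarrow> 'q"
    and phi :: "'q \<Rightarrow> 'q \<Rightarrow> 'l"
  assumes "group G" and "finite (carrier G)"
    and "f \<in> hom G G" and "bij_betw f (carrier G) (carrier G)"
    and "connected_quandle (carrier G) (galex_op G f)"
    and "group L" and "quandle Q op"
    and "\<forall>a\<in>Q. \<forall>b\<in>Q. phi a b \<in> carrier L"
    and "quandle (carrier L \<times> Q) (ext_op L phi op)"
    and "quandle_iso (carrier G) (galex_op G f) (carrier L \<times> Q) (ext_op L phi op)"
    and "card (carrier L) = card (Fix G f)"
  shows "L \<cong> G\<lparr>carrier := Fix G f\<rparr>
         \<and> (\<not> comm_group (G\<lparr>carrier := Fix G f\<rparr>) \<longrightarrow> \<not> comm_group L)"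
proof -
  obtain c where c_hom: "c \<in> hom L (G\<lparr>carrier := Fix G f\<rparr>)" and c_inj: "inj_on c (carrier L)"
    using galex_ext_fix_embedding assms(1,3,5,6,8,10) by blast
  have "c ` carrier L = Fix G f"
  proof (rule card_subset_eq)
    show "finite (Fix G f)" using assms(2) by (simp add: Fix_def)
    show "c ` carrier L \<subseteq> Fix G f" using c_hom by (auto simp: hom_def)
    show "card (c ` carrier L) = card (Fix G f)" using card_image[OF c_inj] assms(11) by simp
  qed
  then have "L \<cong> G\<lparr>carrier := Fix G f\<rparr>"
    using c_hom c_inj by (auto simp: is_iso_def iso_def bij_betw_def)
  moreover have "monoid (G\<lparr>carrier := Fix G f\<rparr>)"
    using subgroup.subgroup_is_group[OF subgroup_Fix[OF assms(1,3)] assms(1)] by (rule group.is_monoid)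
  ultimately show ?thesis
    using comm_group.iso_imp_comm_group by blast
qed

end
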